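(* Let $a$ be a positive integer and define $(U_n)_{n\ge1}$ by $U_1=a$, $U_2=3a$ and $U_{n+2}=U_{n+1}+U_n$ for $n\ge1$. Then $(U_n)$ is exactly realizable.
   Context: For a homeomorphism $f:X\to X$ of a compact metric space $X$, let $\mathrm{Per}_n(f)=\#\{x\in X\mid f^n x=x\}$. A sequence $(U_n)_{n\ge1}$ of non-negative integers is called exactly realizable if there exist a compact metric space $X$ and a homeomorphism $f:X\to X$ with $\mathrm{Per}_n(f)=U_n$ for all $n\ge1$. *)

theory Defs
  imports "HOL-Analysis.Analysis"
begin

definition Per :: "'a metric \<Rightarrow> ('a \<Rightarrow> 'a) \<Rightarrow> nat \<Rightarrow> nat" where
  "Per m f n = card {x \<in> mspace m. (f ^^ n) x = x}"

definition realizes :: "'a metric \<Rightarrow> ('a \<Rightarrow> 'a) \<Rightarrow> (nat \<Rightarrow> nat) \<Rightarrow> bool" where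
  "realizes m f U \<longleftrightarrow>
     compact_space (mtopology_of m) \<and>
     homeomorphic_map (mtopology_of m) (mtopology_of m) f \<and>
     (\<forall>n\<ge>1. finite {x \<in> mspace m. (f ^^ n) x = x} \<and> Per m f n = U n)"

text \<open>Every compact metric space has cardinality at most the
  continuum, hence is isometric to a metric space whose carrier is a subset of the reals;
  so quantifying over metric spaces with carrier in type real loses no generality.\<close>
definition exactly_realizable :: "(nat \<Rightarrow> nat) \<Rightarrow> bool" where
  "exactly_realizable U \<longleftrightarrow> (\<exists>(m :: real metric) f. realizes m f U)"

end

theory Submission
  imports Defs
begin

(* The golden mean shift (0-1 sequences with no two consecutive 1s) has exactly L_n points of
   period n, where L_1 = 1, L_2 = 3, L_(n+2) = L_(n+1) + L_n are the Lucas numbers: a sequence of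
   period n is the same as a word x_0 ... x_n with x_0 = x_n, and these words are counted by the
   Fibonacci-type recurrence obtained by deleting the first letter. So U_n = a L_n, and the shift
   acting on a disjoint copies of its periodic points, with one fixed point removed, is a
   permutation of a countably infinite set with a L_n - 1 points of period n for every n.
   Numbering that set by the naturals and letting the permutation act on the points 2^-k of the
   compact set {0} \<union> {2^-k} gives a homeomorphism fixing 0: it is continuous at 0 because an
   injective map on the naturals tends to infinity. The fixed point 0 restores the missing point,
   so the homeomorphism has exactly a L_n points of period n. *)

lemma bij_betw_if_periodic:
  assumes maps: "f ` A \<subseteq> A" and periodic: "\<And>x. x \<in> A \<Longrightarrow> \<exists>p>0. (f ^^ p) x = x"
  shows "bij_betw f A A"
proof (rule bij_betw_imageI)
  have funpow_pred: "(f ^^ (m - 1)) (f z) = (f ^^ m) z" if "m > 0" for m z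
    using that funpow_Suc_right[of "m - 1" f] by simp
  show "inj_on f A"
  proof (rule inj_onI)
    fix x y assume "x \<in> A" "y \<in> A" "f x = f y"
    obtain p q where "p > 0" "(f ^^ p) x = x" "q > 0" "(f ^^ q) y = y"
      using periodic \<open>x \<in> A\<close> \<open>y \<in> A\<close> by blast
    then have "(f ^^ (p * q)) x = x" "(f ^^ (p * q)) y = y"
      using funpow_mod_eq[where f = f and m = "p * q"] by (metis funpow_0 mod_mult_self2_is_0 mult.commute)+
    then show "x = y"
      using funpow_pred[of "p * q" x] funpow_pred[of "p * q" y] \<open>f x = f y\<close> \<open>p > 0\<close> \<open>q > 0\<close>
      by simp
  qed
  show "f ` A = A"
  proof (intro equalityI maps subsetI)
    fix x assume "x \<in> A"
    then obtain p where "p > 0" "(f ^^ p) x = x" using periodic by blast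
    then have "f ((f ^^ (p - 1)) x) = x"
      using funpow_pred by (simp add: funpow_swap1)
    moreover have "(f ^^ n) x \<in> A" for n
      using \<open>x \<in> A\<close> maps by (induction n) auto
    ultimately show "x \<in> f ` A" by (metis image_eqI)
  qed
qed

lemma filterlim_at_top_if_inj:
  fixes g :: "nat \<Rightarrow> nat"
  assumes "inj g"
  shows "filterlim g at_top sequentially"
proof -
  have "\<forall>\<^sub>F k in cofinite. Z \<le> g k" for Z
    using finite_vimageI[OF finite_lessThan assms] by (simp add: eventually_cofinite not_le vimage_def)
  then show ?thesis by (simp add: filterlim_at_top cofinite_eq_sequentially)
qed

section \<open>Extending a permutation of the naturals to a compact space\<close>

definition pow_half :: "nat \<Rightarrow> real" where
  "pow_half k = (1 / 2) ^ k"

lemma pow_half_pos: "pow_half k > 0"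
  by (simp add: pow_half_def)

lemma pow_half_neq_0 [simp]: "pow_half k \<noteq> 0" "0 \<noteq> pow_half k"
  using pow_half_pos[of k] by simp_all

lemma pow_half_Suc: "pow_half (Suc k) = pow_half k / 2"
  by (simp add: pow_half_def)

lemma pow_half_le_iff: "pow_half j \<le> pow_half k \<longleftrightarrow> k \<le> j"
  by (simp add: pow_half_def)

lemma pow_half_less_iff: "pow_half j < pow_half k \<longleftrightarrow> k < j"
  by (simp add: pow_half_def)

lemma inj_pow_half: "inj pow_half"
  by (rule injI) (simp add: pow_half_def power_inject_exp')

lemma LIMSEQ_pow_half: "pow_half \<longlonglongrightarrow> 0"
  unfolding pow_half_def[abs_def] by (rule LIMSEQ_power_zero) simp

definition pow_half_space :: "real set" where
  "pow_half_space = insert 0 (range pow_half)"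

lemma pow_half_isolated:
  assumes "y \<in> pow_half_space" and "\<bar>y - pow_half k\<bar> < pow_half k / 2"
  shows "y = pow_half k"
proof -
  have "j = k" if "\<bar>pow_half j - pow_half k\<bar> < pow_half k / 2" for j
  proof (rule ccontr)
    assume "j \<noteq> k"
    then consider "Suc k \<le> j" | "Suc j \<le> k" by linarith
    then show False
    proof cases
      case 1
      then have "pow_half j \<le> pow_half k / 2" by (metis pow_half_Suc pow_half_le_iff)
      with that show False by linarith
    next
      case 2
      then have "pow_half k \<le> pow_half j / 2" by (metis pow_half_Suc pow_half_le_iff)
      with that pow_half_pos[of k] show False by linarith
    qed
  qed
  moreover have "y \<noteq> 0" using assms(2) pow_half_pos[of k] by auto
  ultimately show ?thesis using assms by (auto simp: pow_half_space_def)
qed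

lemma continuous_on_pow_half_space:
  fixes h :: "real \<Rightarrow> 'a::metric_space"
  assumes "(\<lambda>k. h (pow_half k)) \<longlonglongrightarrow> h 0"
  shows "continuous_on pow_half_space h"
  unfolding continuous_on_iff
proof (intro ballI allI impI)
  fix x e :: real
  assume x: "x \<in> pow_half_space" and "e > 0"
  show "\<exists>d>0. \<forall>y\<in>pow_half_space. dist y x < d \<longrightarrow> dist (h y) (h x) < e"
  proof (cases "x = 0")
    case True
    obtain N where N: "\<And>k. k \<ge> N \<Longrightarrow> dist (h (pow_half k)) (h 0) < e"
      using assms \<open>e > 0\<close> by (meson LIMSEQ_iff_nz dist_real_def)
    have "dist (h y) (h 0) < e" if "y \<in> pow_half_space" "\<bar>y\<bar> < pow_half N" for y
      using that N \<open>e > 0\<close> by (auto simp: pow_half_space_def pow_half_pos abs_of_pos pow_half_less_iff)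
    then show ?thesis
      using True pow_half_pos[of N] by (intro exI[of _ "pow_half N"]) (auto simp: dist_real_def)
  next
    case False
    then obtain k where "x = pow_half k" using x by (auto simp: pow_half_space_def)
    then have "y = x" if "y \<in> pow_half_space" "dist y x < pow_half k / 2" for y
      using pow_half_isolated that by (simp add: dist_real_def)
    then show ?thesis
      using \<open>e > 0\<close> pow_half_pos[of k] by (metis dist_self half_gt_zero)
  qed
qed

definition extend_perm :: "(nat \<Rightarrow> nat) \<Rightarrow> real \<Rightarrow> real" where
  "extend_perm g y = (if y \<in> range pow_half then pow_half (g (inv pow_half y)) else y)"

lemma extend_perm_pow_half [simp]: "extend_perm g (pow_half k) = pow_half (g k)"
  by (simp add: extend_perm_def inj_pow_half)

lemma extend_perm_0 [simp]: "extend_perm g 0 = 0"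
  by (simp add: extend_perm_def image_iff)

lemma funpow_extend_perm_pow_half: "(extend_perm g ^^ n) (pow_half k) = pow_half ((g ^^ n) k)"
  by (induction n) auto

lemma funpow_extend_perm_0: "(extend_perm g ^^ n) 0 = 0"
  by (induction n) auto

lemma extend_perm_inv:
  assumes "inj g" and "y \<in> pow_half_space"
  shows "extend_perm (inv g) (extend_perm g y) = y"
  using assms by (auto simp: pow_half_space_def)

lemma fixpoints_extend_perm:
  "{y \<in> pow_half_space. (extend_perm g ^^ n) y = y} =
     insert 0 (pow_half ` {k. (g ^^ n) k = k})"
  by (auto simp: pow_half_space_def funpow_extend_perm_pow_half funpow_extend_perm_0 inj_pow_half inj_eq)

lemma compact_pow_half_space: "compact pow_half_space"
  unfolding pow_half_space_def by (rule compact_sequence_with_limit[OF LIMSEQ_pow_half])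

lemma homeomorphic_map_extend_perm:
  assumes bij: "bij g"
  shows "homeomorphic_map (top_of_set pow_half_space) (top_of_set pow_half_space) (extend_perm g)"
proof (rule continuous_imp_homeomorphic_map)
  have "(\<lambda>k. pow_half (g k)) \<longlonglongrightarrow> 0"
    using filterlim_compose[OF LIMSEQ_pow_half filterlim_at_top_if_inj] bij_is_inj[OF bij] .
  then have "continuous_on pow_half_space (extend_perm g)"
    by (intro continuous_on_pow_half_space) simp
  moreover have image: "extend_perm g ` pow_half_space = pow_half_space"
  proof -
    have "extend_perm g ` pow_half_space = insert 0 (pow_half ` range g)"
      unfolding pow_half_space_def image_insert image_image by simp
    then show ?thesis using bij_is_surj[OF bij] by (simp add: pow_half_space_def)
  qed
  ultimately show "continuous_map (top_of_set pow_half_space) (top_of_set pow_half_space) (extend_perm g)"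
    by auto
  show "compact_space (top_of_set pow_half_space)"
    by (simp add: compact_space_subtopology compact_pow_half_space)
  show "Hausdorff_space (top_of_set pow_half_space)"
    by (simp add: Hausdorff_space_subtopology)
  show "extend_perm g ` topspace (top_of_set pow_half_space) = topspace (top_of_set pow_half_space)"
    using image by simp
  show "inj_on (extend_perm g) (topspace (top_of_set pow_half_space))"
    using extend_perm_inv[OF bij_is_inj[OF bij]] by (auto intro: inj_on_inverseI)
qed

lemma realizes_extend_perm:
  assumes bij: "bij g" and fin: "\<And>n. n \<ge> 1 \<Longrightarrow> finite {k. (g ^^ n) k = k}"
  shows "realizes (submetric euclidean_metric pow_half_space) (extend_perm g)
           (\<lambda>n. Suc (card {k. (g ^^ n) k = k}))"
  unfolding realizes_def Per_def mtopology_of_submetric mtopology_of_euclidean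
proof (intro conjI allI impI)
  show "compact_space (top_of_set pow_half_space)"
    by (simp add: compact_space_subtopology compact_pow_half_space)
  show "homeomorphic_map (top_of_set pow_half_space)
          (top_of_set pow_half_space) (extend_perm g)"
    using homeomorphic_map_extend_perm[OF bij] .
  fix n :: nat assume "n \<ge> 1"
  then show "finite {y \<in> mspace (submetric euclidean_metric pow_half_space).
                (extend_perm g ^^ n) y = y}"
    using fin by (simp add: fixpoints_extend_perm)
  show "card {y \<in> mspace (submetric euclidean_metric pow_half_space).
                (extend_perm g ^^ n) y = y} = Suc (card {k. (g ^^ n) k = k})"
    using fin[OF \<open>n \<ge> 1\<close>]
    by (simp add: fixpoints_extend_perm card_image inj_on_subset[OF inj_pow_half subset_UNIV] image_iff)
qed

lemma exactly_realizable_if_permutation: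
  assumes "countable T" and "infinite T" and bij: "bij_betw h T T"
    and fin: "\<And>n. n \<ge> 1 \<Longrightarrow> finite {x \<in> T. (h ^^ n) x = x}"
    and U: "\<And>n. n \<ge> 1 \<Longrightarrow> U n = Suc (card {x \<in> T. (h ^^ n) x = x})"
  shows "exactly_realizable U"
proof -
  obtain e :: "'a \<Rightarrow> nat" where e: "bij_betw e T UNIV"
    using countableE_infinite[OF \<open>countable T\<close> \<open>infinite T\<close>] .
  define g where "g = e \<circ> h \<circ> inv_into T e"
  have bij_g: "bij g"
    unfolding g_def comp_assoc using bij_betw_trans[OF bij_betw_trans[OF bij_betw_inv_into[OF e] bij] e] .
  have funpow_g: "(g ^^ n) k = e ((h ^^ n) (inv_into T e k))" for n k
  proof (induction n)
    case 0
    then show ?case using e by (simp add: bij_betw_inv_into_right)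
  next
    case (Suc n)
    have "(h ^^ n) (inv_into T e k) \<in> T"
      using bij_betwE[OF bij_betw_funpow[OF bij]] bij_betwE[OF bij_betw_inv_into[OF e]] by blast
    then show ?case using Suc e by (simp add: g_def bij_betw_inv_into_left)
  qed
  have fix_g: "{k. (g ^^ n) k = k} = e ` {x \<in> T. (h ^^ n) x = x}" for n
  proof -
    have fixed_iff: "(g ^^ n) (e x) = e x \<longleftrightarrow> (h ^^ n) x = x" if "x \<in> T" for x
      using that e bij_betwE[OF bij_betw_funpow[OF bij]]
      by (auto simp: funpow_g bij_betw_inv_into_left bij_betw_def inj_on_eq_iff)
    have "{k. (g ^^ n) k = k} = {k \<in> e ` T. (g ^^ n) k = k}"
      using e by (simp add: bij_betw_def)
    also have "\<dots> = e ` {x \<in> T. (g ^^ n) (e x) = e x}"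
      by (rule Compr_image_eq)
    also have "\<dots> = e ` {x \<in> T. (h ^^ n) x = x}"
      using fixed_iff by (simp cong: conj_cong)
    finally show ?thesis .
  qed
  have inj_e: "inj_on e {x \<in> T. (h ^^ n) x = x}" for n
    using e by (auto simp: bij_betw_def intro: inj_on_subset)
  have "realizes (submetric euclidean_metric pow_half_space) (extend_perm g) U"
    using realizes_extend_perm[OF bij_g] fin U
    by (simp add: realizes_def fix_g card_image[OF inj_e])
  then show ?thesis unfolding exactly_realizable_def by blast
qed

section \<open>Periodic points of the golden mean shift\<close>

definition shift :: "(nat \<Rightarrow> 'a) \<Rightarrow> nat \<Rightarrow> 'a" where
  "shift s k = s (Suc k)"

lemma funpow_shift: "(shift ^^ n) s = (\<lambda>k. s (k + n))"
  by (induction n) (auto simp: shift_def)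

lemma shift_periodic_mod:
  assumes "(shift ^^ n) s = s"
  shows "s k = s (k mod n)"
  using fun_cong[OF funpow_mod_eq[where f = shift and m = k, OF assms], of 0] by (simp add: funpow_shift)

lemma countable_shift_periodic: "countable {s :: nat \<Rightarrow> 'a::countable. \<exists>p>0. (shift ^^ p) s = s}"
proof (rule countable_subset)
  show "{s :: nat \<Rightarrow> 'a. \<exists>p>0. (shift ^^ p) s = s} \<subseteq> (\<lambda>(p, xs) k. xs ! (k mod p)) ` UNIV"
  proof
    fix s :: "nat \<Rightarrow> 'a" assume "s \<in> {s. \<exists>p>0. (shift ^^ p) s = s}"
    then obtain p where "p > 0" "(shift ^^ p) s = s" by blast
    then have "s = (\<lambda>k. map s [0..<p] ! (k mod p))"
      using shift_periodic_mod by (auto simp: fun_eq_iff)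
    then show "s \<in> (\<lambda>(p, xs) k. xs ! (k mod p)) ` UNIV" by (auto simp: image_iff)
  qed
qed simp

definition golden :: "(nat \<Rightarrow> bool) \<Rightarrow> bool" where
  "golden s \<longleftrightarrow> (\<forall>k. \<not> (s k \<and> s (Suc k)))"

definition golden_fix :: "nat \<Rightarrow> (nat \<Rightarrow> bool) set" where
  "golden_fix n = {s. golden s \<and> (shift ^^ n) s = s}"

definition golden_periodic :: "(nat \<Rightarrow> bool) set" where
  "golden_periodic = {s. golden s \<and> (\<exists>p>0. (shift ^^ p) s = s)}"

lemma countable_golden_periodic: "countable golden_periodic"
  unfolding golden_periodic_def by (rule countable_subset[OF _ countable_shift_periodic]) blast

lemma infinite_golden_periodic: "infinite golden_periodic"
proof -
  define multiples where "multiples p = (\<lambda>k. p dvd k)" for p :: nat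
  have "inj_on multiples {2..}"
    by (rule inj_onI) (metis dvd_antisym dvd_refl multiples_def)
  moreover have "multiples p \<in> golden_periodic" if "p \<ge> 2" for p
  proof -
    have "\<not> (p dvd k \<and> p dvd Suc k)" for k
      using that dvd_add_right_iff[of p k 1] by auto
    moreover have "(shift ^^ p) (multiples p) = multiples p"
      by (simp add: funpow_shift multiples_def)
    ultimately show ?thesis
      using that by (auto simp: golden_periodic_def golden_def multiples_def intro: exI[of _ p])
  qed
  ultimately show ?thesis
    using finite_imageD infinite_Ici infinite_super by (metis atLeast_iff image_subsetI)
qed

definition golden_word :: "bool list \<Rightarrow> bool" where
  "golden_word xs \<longleftrightarrow> (\<forall>i. Suc i < length xs \<longrightarrow> \<not> (xs ! i \<and> xs ! Suc i))"

definition golden_words :: "nat \<Rightarrow> bool \<Rightarrow> bool \<Rightarrow> bool list set" where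
  "golden_words n b c = {xs. length xs = Suc n \<and> golden_word xs \<and> xs ! 0 = b \<and> xs ! n = c}"

lemma golden_word_Cons: "golden_word (b # xs) \<longleftrightarrow> golden_word xs \<and> (xs \<noteq> [] \<longrightarrow> \<not> (b \<and> xs ! 0))"
  unfolding golden_word_def by (auto simp: nth_Cons split: nat.splits)

lemma finite_golden_words: "finite (golden_words n b c)"
  by (rule finite_subset[OF _ finite_lists_length_eq[of "UNIV :: bool set" "Suc n"]])
    (auto simp: golden_words_def)

lemma golden_words_0: "golden_words 0 b c = (if b = c then {[b]} else {})"
  by (auto simp: golden_words_def golden_word_def length_Suc_conv)

lemma golden_words_Suc:
  "golden_words (Suc n) b c = (#) b ` (golden_words n False c \<union> (if b then {} else golden_words n True c))"
proof (intro equalityI subsetI)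
  fix xs assume "xs \<in> golden_words (Suc n) b c"
  then obtain ys where "xs = b # ys" "length ys = Suc n" "golden_word ys" "ys ! n = c" "\<not> (b \<and> ys ! 0)"
    by (auto simp: golden_words_def length_Suc_conv golden_word_Cons)
  then show "xs \<in> (#) b ` (golden_words n False c \<union> (if b then {} else golden_words n True c))"
    by (cases "ys ! 0") (auto simp: golden_words_def)
qed (auto simp: golden_words_def golden_word_Cons split: if_splits)

lemma card_golden_words_Suc_False:
  "card (golden_words (Suc n) False c) = card (golden_words n False c) + card (golden_words n True c)"
proof -
  have "card (golden_words (Suc n) False c) = card (golden_words n False c \<union> golden_words n True c)"
    by (simp add: golden_words_Suc card_image)
  also have "\<dots> = card (golden_words n False c) + card (golden_words n True c)"
    by (rule card_Un_disjoint[OF finite_golden_words finite_golden_words]) (auto simp: golden_words_def)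
  finally show ?thesis .
qed

lemma card_golden_words_Suc_True: "card (golden_words (Suc n) True c) = card (golden_words n False c)"
  by (simp add: golden_words_Suc card_image)

lemma card_golden_words_recurrence:
  "card (golden_words (n + 2) b c) = card (golden_words (n + 1) b c) + card (golden_words n b c)"
  by (cases b) (simp_all add: card_golden_words_Suc_False card_golden_words_Suc_True)

lemma bij_betw_golden_fix_words:
  assumes "n \<ge> 1"
  shows "bij_betw (\<lambda>s. map s [0..<Suc n]) (golden_fix n) (golden_words n False False \<union> golden_words n True True)"
proof (rule bij_betw_imageI)
  show "inj_on (\<lambda>s. map s [0..<Suc n]) (golden_fix n)"
  proof (rule inj_onI)
    fix s t assume "s \<in> golden_fix n" "t \<in> golden_fix n" "map s [0..<Suc n] = map t [0..<Suc n]"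
    moreover have "k mod n \<in> set [0..<Suc n]" for k
      using assms by (simp add: less_Suc_eq_le order_less_imp_le)
    ultimately have "s (k mod n) = t (k mod n)" for k
      by (metis map_eq_conv)
    then show "s = t"
      using \<open>s \<in> golden_fix n\<close> \<open>t \<in> golden_fix n\<close> shift_periodic_mod by (auto simp: golden_fix_def fun_eq_iff)
  qed
  show "(\<lambda>s. map s [0..<Suc n]) ` golden_fix n = golden_words n False False \<union> golden_words n True True"
  proof (intro equalityI subsetI)
    fix xs assume "xs \<in> (\<lambda>s. map s [0..<Suc n]) ` golden_fix n"
    then obtain s where s: "golden s" "(shift ^^ n) s = s" and xs: "xs = map s [0..<Suc n]"
      by (auto simp: golden_fix_def)
    have "s n = s 0" using shift_periodic_mod[OF s(2), of n] by simp
    then show "xs \<in> golden_words n False False \<union> golden_words n True True"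
      using s(1) unfolding xs
      by (cases "s 0") (auto simp: golden_words_def golden_word_def golden_def nth_append simp del: upt_Suc)
  next
    fix xs assume "xs \<in> golden_words n False False \<union> golden_words n True True"
    then have xs: "length xs = Suc n" "golden_word xs" "xs ! n = xs ! 0"
      by (auto simp: golden_words_def)
    define s where "s k = xs ! (k mod n)" for k
    have s_Suc: "s (Suc k) = xs ! Suc (k mod n)" for k
      using assms xs(3) by (cases "Suc (k mod n) = n") (auto simp: s_def mod_Suc)
    have "golden s"
      unfolding golden_def
    proof
      fix k
      have "Suc (k mod n) < length xs" using assms xs(1) by simp
      then show "\<not> (s k \<and> s (Suc k))"
        using xs(2) s_Suc[of k] by (simp add: s_def golden_word_def)
    qed
    moreover have "(shift ^^ n) s = s"
      by (simp add: funpow_shift s_def fun_eq_iff)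
    moreover have "map s [0..<Suc n] = xs"
      using xs(1,3) by (intro nth_equalityI) (auto simp: s_def less_Suc_eq simp del: upt_Suc)
    ultimately show "xs \<in> (\<lambda>s. map s [0..<Suc n]) ` golden_fix n"
      by (auto simp: golden_fix_def)
  qed
qed

lemma finite_golden_fix: "n \<ge> 1 \<Longrightarrow> finite (golden_fix n)"
  using bij_betw_finite[OF bij_betw_golden_fix_words] finite_golden_words by blast

lemma card_golden_fix:
  assumes "n \<ge> 1"
  shows "card (golden_fix n) = card (golden_words n False False) + card (golden_words n True True)"
proof -
  have "golden_words n False False \<inter> golden_words n True True = {}"
    by (auto simp: golden_words_def)
  then show ?thesis
    using bij_betw_same_card[OF bij_betw_golden_fix_words[OF assms]]
    by (simp add: card_Un_disjoint finite_golden_words)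
qed

fun lucas :: "nat \<Rightarrow> nat" where
  "lucas 0 = 2"
| "lucas (Suc 0) = 1"
| "lucas (Suc (Suc n)) = lucas (Suc n) + lucas n"

lemma lucas_pos: "lucas n > 0"
  by (induction n rule: lucas.induct) simp_all

lemma eq_mult_lucas:
  fixes V :: "nat \<Rightarrow> nat"
  assumes "V 1 = c" and "V 2 = 3 * c" and "\<And>n. n \<ge> 1 \<Longrightarrow> V (n + 2) = V (n + 1) + V n"
  shows "n \<ge> 1 \<Longrightarrow> V n = c * lucas n"
proof (induction n rule: lucas.induct)
  case (3 n)
  show ?case
  proof (cases "n = 0")
    case True
    then show ?thesis using assms(2) by (simp add: numeral_2_eq_2)
  next
    case False
    then have "V (Suc (Suc n)) = V (Suc n) + V n" using assms(3)[of n] by simp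
    then show ?thesis using 3 False by (simp add: distrib_left)
  qed
qed (use assms(1) in simp_all)

lemma card_golden_fix_lucas: "n \<ge> 1 \<Longrightarrow> card (golden_fix n) = lucas n"
  using eq_mult_lucas[of "\<lambda>n. card (golden_fix n)" 1]
  by (simp add: card_golden_fix card_golden_words_recurrence numeral_eq_Suc
      card_golden_words_Suc_False card_golden_words_Suc_True golden_words_0)

definition golden_copies :: "nat \<Rightarrow> (nat \<times> (nat \<Rightarrow> bool)) set" where
  "golden_copies a = ({..<a} \<times> golden_periodic) - {(0, \<lambda>_. False)}"

lemma funpow_apsnd:
  fixes f :: "'b \<Rightarrow> 'b"
  shows "(apsnd f ^^ n) (i, x) = (i, (f ^^ n) x)"
  by (induction n) simp_all

lemma countable_golden_copies: "countable (golden_copies a)"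
  unfolding golden_copies_def using countable_golden_periodic by auto

lemma infinite_golden_copies:
  assumes "a > 0"
  shows "infinite (golden_copies a)"
  using assms infinite_golden_periodic
  by (auto simp: golden_copies_def finite_cartesian_product_iff dest: Diff_infinite_finite)

lemma bij_betw_golden_copies:
  assumes "a > 0"
  shows "bij_betw (apsnd shift) (golden_copies a) (golden_copies a)"
proof -
  have "bij_betw (apsnd shift) ({..<a} \<times> golden_periodic) ({..<a} \<times> golden_periodic)"
  proof (rule bij_betw_if_periodic)
    show "apsnd shift ` ({..<a} \<times> golden_periodic) \<subseteq> {..<a} \<times> golden_periodic"
      by (auto simp: golden_periodic_def golden_def shift_def funpow_swap1[where f = shift, symmetric])
    show "\<exists>p>0. (apsnd shift ^^ p) x = x" if "x \<in> {..<a} \<times> golden_periodic" for x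
      using that by (auto simp: golden_periodic_def funpow_apsnd)
  qed
  moreover have "apsnd shift (0, \<lambda>_. False) = (0, \<lambda>_. False)"
    by (simp add: shift_def fun_eq_iff)
  ultimately show ?thesis
    unfolding golden_copies_def
    using assms by (intro bij_betw_DiffI) (auto simp: golden_periodic_def golden_def intro: exI[of _ 1])
qed

lemma fixpoints_golden_copies:
  assumes "n \<ge> 1"
  shows "{x \<in> golden_copies a. (apsnd shift ^^ n) x = x} = ({..<a} \<times> golden_fix n) - {(0, \<lambda>_. False)}"
proof (intro set_eqI)
  fix x :: "nat \<times> (nat \<Rightarrow> bool)"
  obtain i s where x: "x = (i, s)" by (cases x)
  show "x \<in> {x \<in> golden_copies a. (apsnd shift ^^ n) x = x} \<longleftrightarrow> x \<in> {..<a} \<times> golden_fix n - {(0, \<lambda>_. False)}"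
    using assms
    by (auto simp: x golden_copies_def golden_fix_def golden_periodic_def funpow_apsnd intro: exI[of _ n])
qed

lemma card_fixpoints_golden_copies:
  assumes "n \<ge> 1" and "a > 0"
  shows "Suc (card {x \<in> golden_copies a. (apsnd shift ^^ n) x = x}) = a * lucas n"
proof -
  have "(0, \<lambda>_. False) \<in> {..<a} \<times> golden_fix n"
    using assms(2) by (simp add: golden_fix_def golden_def funpow_shift)
  then show ?thesis
    using assms lucas_pos[of n]
    by (simp add: fixpoints_golden_copies card_Diff_singleton card_cartesian_product
        card_golden_fix_lucas finite_golden_fix)
qed

theorem lemma2:
  fixes a :: nat and U :: "nat \<Rightarrow> nat"
  assumes "a > 0"
    and "U 1 = a" and "U 2 = 3 * a"
    and "\<And>n. n \<ge> 1 \<Longrightarrow> U (n + 2) = U (n + 1) + U n"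
  shows "exactly_realizable U"
proof (rule exactly_realizable_if_permutation[of "golden_copies a" "apsnd shift"])
  show "countable (golden_copies a)" by (rule countable_golden_copies)
  show "infinite (golden_copies a)" using \<open>a > 0\<close> by (rule infinite_golden_copies)
  show "bij_betw (apsnd shift) (golden_copies a) (golden_copies a)"
    using \<open>a > 0\<close> by (rule bij_betw_golden_copies)
  fix n :: nat assume "n \<ge> 1"
  then show "finite {x \<in> golden_copies a. (apsnd shift ^^ n) x = x}"
    by (simp add: fixpoints_golden_copies finite_golden_fix)
  have "U n = a * lucas n"
    using eq_mult_lucas[of U a] assms(2-4) \<open>n \<ge> 1\<close> by blast
  then show "U n = Suc (card {x \<in> golden_copies a. (apsnd shift ^^ n) x = x})"
    using card_fixpoints_golden_copies[OF \<open>n \<ge> 1\<close> \<open>a > 0\<close>] by simp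
qed

end
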